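(* Let $d\ge2$. For any matrix $X\in\mathbb{C}^{d^2\times d^2}$ (acting on $\mathbb{C}^d\otimes\mathbb{C}^d$), $$\sum_{\mathbf{a}\in\{0,\dots,d-1\}^2} (W_\mathbf{a}\otimes W_\mathbf{a})\,X\,(W_\mathbf{a}\otimes W_\mathbf{a})^\dagger = \sum_{\mathbf{a}\in\{0,\dots,d-1\}^2} \operatorname{tr}\!\big(X\,(W_\mathbf{a}^\dagger\otimes W_\mathbf{a})\big)\, W_\mathbf{a}\otimes W_\mathbf{a}^\dagger.$$
   Context: $\{|i\rangle\}_{i=0}^{d-1}$ is the standard basis of $\mathbb{C}^d$, indices mod $d$. Let $\tau=\exp(2\pi i\frac{d+1}{2d})$, $\omega=\tau^2=\exp(2\pi i/d)$, $S=\sum_{i=0}^{d-1}|i+1\rangle\langle i|$, $C=\sum_{i=0}^{d-1}\omega^i|i\rangle\langle i|$, and for $\mathbf{a}=(a_1,a_2)\in\mathbb{Z}^2$ let $W_\mathbf{a}=\tau^{a_1a_2}S^{a_1}C^{a_2}$. *)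

theory Defs
  imports Complex_Main "Jordan_Normal_Form.Matrix"
begin

definition tau :: "nat \<Rightarrow> complex" where
  "tau d = exp (2 * of_real pi * \<i> * of_nat (d + 1) / of_nat (2 * d))"

definition omega :: "nat \<Rightarrow> complex" where
  "omega d = (tau d)^2"

definition shift :: "nat \<Rightarrow> complex mat" where
  "shift d = mat d d (\<lambda>(r, c). if r = (c + 1) mod d then 1 else 0)"

definition clock :: "nat \<Rightarrow> complex mat" where
  "clock d = mat d d (\<lambda>(r, c). if r = c then (omega d) ^ r else 0)"

definition weyl :: "nat \<Rightarrow> nat \<Rightarrow> nat \<Rightarrow> complex mat" where
  "weyl d a1 a2 = (tau d) ^ (a1 * a2) \<cdot>\<^sub>m (shift d ^\<^sub>m a1 * clock d ^\<^sub>m a2)"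

definition dagger :: "complex mat \<Rightarrow> complex mat" where
  "dagger A = mat (dim_col A) (dim_row A) (\<lambda>(i, j). cnj (A $$ (j, i)))"

(* Kronecker (tensor) product, basis |i>|j> ordered as index i * dim + j *)
definition kron :: "complex mat \<Rightarrow> complex mat \<Rightarrow> complex mat" where
  "kron A B = mat (dim_row A * dim_row B) (dim_col A * dim_col B)
     (\<lambda>(i, j). A $$ (i div dim_row B, j div dim_col B) * B $$ (i mod dim_row B, j mod dim_col B))"

definition mtrace :: "complex mat \<Rightarrow> complex" where
  "mtrace A = (\<Sum>i<dim_row A. A $$ (i, i))"

definition msum :: "nat \<Rightarrow> ('i \<Rightarrow> complex mat) \<Rightarrow> 'i set \<Rightarrow> complex mat" where
  "msum n f I = mat n n (\<lambda>ij. \<Sum>a\<in>I. f a $$ ij)"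

end

theory Submission
  imports Defs "HOL-Number_Theory.Cong" "HOL-Analysis.Complex_Transcendental"
begin

(* Both sides are linear in X, so it suffices to compare their kernels entrywise. Writing
   W_a(i, j) = [i = j + a1 (mod d)] tau^(a1 a2) omega^(j a2), the phases tau^(a1 a2) cancel in
   each kernel, and since omega is a primitive d-th root of unity the sum over a2 is a character
   sum, equal to d times a congruence indicator. What remains on each side is d times the number of
   shifts a1 < d solving a system of congruences in the eight basis indices; both systems are
   solvable exactly when the same congruences between index differences hold, and then the
   solution a1 is unique mod d. *)

lemma cnj_tau: "cnj (tau d) = inverse (tau d)"
  unfolding tau_def by (simp add: exp_cnj exp_minus[symmetric])

lemma tau_nonzero [simp]: "tau d \<noteq> 0"
  unfolding tau_def by simp

lemma omega_nonzero [simp]: "omega d \<noteq> 0"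
  unfolding omega_def by simp

lemma cnj_omega: "cnj (omega d) = inverse (omega d)"
  unfolding omega_def by (simp add: cnj_tau power_inverse)

lemma omega_power:
  assumes "0 < d"
  shows "omega d ^ n = exp (2 * of_real pi * \<i> * of_nat (n * (d + 1)) / of_nat d)"
proof -
  have power: "omega d ^ n = exp (of_nat (2 * n) * (2 * of_real pi * \<i> * of_nat (d + 1) / of_nat (2 * d)))"
    unfolding omega_def tau_def exp_of_nat_mult by (simp add: power_mult)
  have exponent: "of_nat (2 * n) * (2 * of_real pi * \<i> * of_nat (d + 1) / of_nat (2 * d))
      = 2 * of_real pi * \<i> * of_nat (n * (d + 1)) / (of_nat d :: complex)"
    using assms by (simp add: field_simps)
  show ?thesis unfolding power exponent ..
qed

lemma omega_power_eq_iff: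
  assumes "0 < d"
  shows "omega d ^ x = omega d ^ y \<longleftrightarrow> [x = y] (mod d)"
proof -
  have "(z * (d + 1)) mod d = z mod d" for z
    by (simp add: algebra_simps)
  then show ?thesis
    using assms unfolding omega_power[OF assms] by (subst complex_root_unity_eq) (simp_all add: cong_def)
qed

lemma omega_character_sum:
  assumes "0 < d"
  shows "(\<Sum>a<d. omega d ^ (x * a) * cnj (omega d ^ (y * a))) = of_bool ([x = y] (mod d)) * of_nat d"
proof -
  define z where "z = omega d ^ x / omega d ^ y"
  have terms: "omega d ^ (x * a) * cnj (omega d ^ (y * a)) = z ^ a" for a
    by (simp add: z_def cnj_omega power_mult power_divide divide_inverse power_inverse power_mult_distrib)
  have "z ^ d = 1"
    using omega_power_eq_iff[OF assms, of "x * d" "y * d"]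
    by (simp add: z_def power_divide power_mult[symmetric] cong_def)
  moreover have "z = 1 \<longleftrightarrow> [x = y] (mod d)"
    using omega_power_eq_iff[OF assms, of x y] by (simp add: z_def)
  ultimately show ?thesis unfolding terms by (simp add: sum_gp_strict)
qed

lemma cong_add_iff_cong_diff:
  fixes x y a m :: int
  shows "[x = y + a] (mod m) \<longleftrightarrow> [a = x - y] (mod m)"
  by (metis cong_iff_dvd_diff cong_sym_eq diff_diff_eq)

lemma sum_of_bool_cong_class:
  assumes "0 < d"
  shows "(\<Sum>a<d. of_bool ([int a = c] (mod int d) \<and> P)) = (of_bool P :: 'a::semiring_1)"
proof -
  define a0 where "a0 = nat (c mod int d)"
  have "a0 < d"
    using assms by (simp add: a0_def nat_less_iff)
  have "[int a = c] (mod int d) \<longleftrightarrow> a = a0" if "a < d" for a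
    using that assms by (auto simp: a0_def cong_def)
  then have "(\<Sum>a<d. of_bool ([int a = c] (mod int d) \<and> P)) = (\<Sum>a<d. if a = a0 then of_bool P else (0::'a))"
    by (intro sum.cong) auto
  also have "\<dots> = of_bool P"
    using \<open>a0 < d\<close> by simp
  finally show ?thesis .
qed

lemma cong_shift_system_iff:
  fixes i j k l p q r s m :: int
  shows "([j - q = i - p] (mod m) \<and> [k - r = i - p] (mod m) \<and> [l - s = i - p] (mod m) \<and> [p + q = r + s] (mod m))
     \<longleftrightarrow> ([s - q = p - r] (mod m) \<and> [i - k = p - r] (mod m) \<and> [l - j = p - r] (mod m) \<and> [q + k = r + j] (mod m))"
proof -
  define u1 u2 u3 u4
    where "u1 = j - q - (i - p)" and "u2 = k - r - (i - p)" and "u3 = l - s - (i - p)" and "u4 = p + q - (r + s)"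
  have differences: "s - q - (p - r) = - u4" "i - k - (p - r) = - u2" "l - j - (p - r) = u3 - u1 - u4" "q + k - (r + j) = u2 - u1"
    by (simp_all add: u1_def u2_def u3_def u4_def algebra_simps)
  have "m dvd u1 \<and> m dvd u2 \<and> m dvd u3 \<and> m dvd u4
      \<longleftrightarrow> m dvd - u4 \<and> m dvd - u2 \<and> m dvd u3 - u1 - u4 \<and> m dvd u2 - u1"
    by (metis dvd_diff_right_iff dvd_minus_iff zdvd_zdiffD)
  then show ?thesis
    unfolding cong_iff_dvd_diff differences u1_def[symmetric] u2_def[symmetric] u3_def[symmetric] u4_def[symmetric] .
qed

lemma common_shift_count_eq:
  fixes i j k l p q r s d :: nat
  assumes "0 < d"
  shows "(\<Sum>a<d. of_bool ([i = p + a] (mod d) \<and> [j = q + a] (mod d) \<and> [k = r + a] (mod d) \<and> [l = s + a] (mod d)))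
           * of_bool ([p + q = r + s] (mod d))
       = (\<Sum>a<d. of_bool ([p = r + a] (mod d) \<and> [s = q + a] (mod d) \<and> [i = k + a] (mod d) \<and> [l = j + a] (mod d)))
           * (of_bool ([q + k = r + j] (mod d)) :: 'a::semiring_1)"
proof -
  let ?D = "int d"
  have common_shift:
    "([x1 = y1 + a] (mod d) \<and> [x2 = y2 + a] (mod d) \<and> [x3 = y3 + a] (mod d) \<and> [x4 = y4 + a] (mod d))
     \<longleftrightarrow> [int a = int x1 - int y1] (mod ?D) \<and>
         ([int x2 - int y2 = int x1 - int y1] (mod ?D) \<and> [int x3 - int y3 = int x1 - int y1] (mod ?D)
           \<and> [int x4 - int y4 = int x1 - int y1] (mod ?D))" for x1 y1 x2 y2 x3 y3 x4 y4 a :: nat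
    unfolding cong_int_iff[symmetric] of_nat_add cong_add_iff_cong_diff
    by (meson cong_sym cong_trans)
  have lhs: "(\<Sum>a<d. of_bool ([i = p + a] (mod d) \<and> [j = q + a] (mod d) \<and> [k = r + a] (mod d) \<and> [l = s + a] (mod d)))
      = (of_bool ([int j - int q = int i - int p] (mod ?D) \<and> [int k - int r = int i - int p] (mod ?D)
           \<and> [int l - int s = int i - int p] (mod ?D)) :: 'a)"
    unfolding common_shift by (rule sum_of_bool_cong_class[OF assms])
  have rhs: "(\<Sum>a<d. of_bool ([p = r + a] (mod d) \<and> [s = q + a] (mod d) \<and> [i = k + a] (mod d) \<and> [l = j + a] (mod d)))
      = (of_bool ([int s - int q = int p - int r] (mod ?D) \<and> [int i - int k = int p - int r] (mod ?D)
           \<and> [int l - int j = int p - int r] (mod ?D)) :: 'a)"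
    unfolding common_shift by (rule sum_of_bool_cong_class[OF assms])
  have "[p + q = r + s] (mod d) \<longleftrightarrow> [int p + int q = int r + int s] (mod ?D)"
    "[q + k = r + j] (mod d) \<longleftrightarrow> [int q + int k = int r + int j] (mod ?D)"
    by (simp_all only: cong_int_iff[symmetric] of_nat_add)
  then show ?thesis
    using cong_shift_system_iff[of "int j" "int q" "int i" "int p" ?D "int k" "int r" "int l" "int s"]
    unfolding lhs rhs of_bool_conj[symmetric] conj_assoc by (simp only:)
qed

lemma index_mult_mat_sum:
  assumes "A \<in> carrier_mat n m" "B \<in> carrier_mat m k" "i < n" "j < k"
  shows "(A * B) $$ (i, j) = (\<Sum>l<m. A $$ (i, l) * B $$ (l, j))"
  using assms by (simp add: scalar_prod_def atLeast0LessThan)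

lemma dagger_carrier [simp]: "A \<in> carrier_mat n m \<Longrightarrow> dagger A \<in> carrier_mat m n"
  unfolding dagger_def by simp

lemma dagger_entry:
  "A \<in> carrier_mat n m \<Longrightarrow> i < m \<Longrightarrow> j < n \<Longrightarrow> dagger A $$ (i, j) = cnj (A $$ (j, i))"
  unfolding dagger_def by simp

lemma kron_carrier [simp]:
  "A \<in> carrier_mat m n \<Longrightarrow> B \<in> carrier_mat p q \<Longrightarrow> kron A B \<in> carrier_mat (m * p) (n * q)"
  unfolding kron_def by simp

lemma kron_entry:
  assumes "A \<in> carrier_mat m n" "B \<in> carrier_mat p q" "I < m * p" "J < n * q"
  shows "kron A B $$ (I, J) = A $$ (I div p, J div q) * B $$ (I mod p, J mod q)"
  using assms unfolding kron_def by simp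

lemma sandwich_entry:
  assumes "U \<in> carrier_mat n n" "X \<in> carrier_mat n n" "I < n" "J < n"
  shows "(U * X * dagger U) $$ (I, J) = (\<Sum>P<n. \<Sum>Q<n. X $$ (P, Q) * (U $$ (I, P) * cnj (U $$ (J, Q))))"
proof -
  have "(U * X * dagger U) $$ (I, J) = (\<Sum>Q<n. (U * X) $$ (I, Q) * cnj (U $$ (J, Q)))"
    using assms by (simp add: index_mult_mat_sum[of _ n n _ n] dagger_entry del: index_mult_mat)
  also have "\<dots> = (\<Sum>Q<n. (\<Sum>P<n. U $$ (I, P) * X $$ (P, Q)) * cnj (U $$ (J, Q)))"
    using assms by (intro sum.cong refl) (simp add: index_mult_mat_sum[of _ n n _ n] del: index_mult_mat)
  also have "\<dots> = (\<Sum>Q<n. \<Sum>P<n. X $$ (P, Q) * (U $$ (I, P) * cnj (U $$ (J, Q))))"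
    by (simp add: sum_distrib_left sum_distrib_right mult_ac)
  also have "\<dots> = (\<Sum>P<n. \<Sum>Q<n. X $$ (P, Q) * (U $$ (I, P) * cnj (U $$ (J, Q))))"
    by (rule sum.swap)
  finally show ?thesis .
qed

lemma mtrace_mult:
  assumes "X \<in> carrier_mat n n" "V \<in> carrier_mat n n"
  shows "mtrace (X * V) = (\<Sum>P<n. \<Sum>Q<n. X $$ (P, Q) * V $$ (Q, P))"
proof -
  have "dim_row (X * V) = n"
    using assms(1) by simp
  then show ?thesis
    unfolding mtrace_def using assms
    by (simp add: index_mult_mat_sum[of _ n n _ n] del: index_mult_mat)
qed

lemma msum_dim [simp]: "dim_row (msum n f S) = n" "dim_col (msum n f S) = n"
  unfolding msum_def by simp_all

lemma msum_entry:
  "I < n \<Longrightarrow> J < n \<Longrightarrow> msum n f S $$ (I, J) = (\<Sum>a\<in>S. f a $$ (I, J))"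
  unfolding msum_def by simp

lemma msum_sandwich_entry:
  assumes "\<And>a. a \<in> S \<Longrightarrow> U a \<in> carrier_mat n n" "X \<in> carrier_mat n n" "I < n" "J < n"
  shows "msum n (\<lambda>a. U a * X * dagger (U a)) S $$ (I, J)
       = (\<Sum>P<n. \<Sum>Q<n. X $$ (P, Q) * (\<Sum>a\<in>S. U a $$ (I, P) * cnj (U a $$ (J, Q))))"
proof -
  have "msum n (\<lambda>a. U a * X * dagger (U a)) S $$ (I, J)
      = (\<Sum>a\<in>S. \<Sum>P<n. \<Sum>Q<n. X $$ (P, Q) * (U a $$ (I, P) * cnj (U a $$ (J, Q))))"
    unfolding msum_entry[OF assms(3,4)] using assms by (intro sum.cong refl sandwich_entry) auto
  also have "\<dots> = (\<Sum>P<n. \<Sum>Q<n. \<Sum>a\<in>S. X $$ (P, Q) * (U a $$ (I, P) * cnj (U a $$ (J, Q))))"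
    by (subst sum.swap) (simp add: sum.swap[of _ S])
  finally show ?thesis
    by (simp add: sum_distrib_left)
qed

lemma msum_trace_smult_entry:
  assumes "\<And>a. a \<in> S \<Longrightarrow> V a \<in> carrier_mat n n" "\<And>a. a \<in> S \<Longrightarrow> R a \<in> carrier_mat n n"
    "X \<in> carrier_mat n n" "I < n" "J < n"
  shows "msum n (\<lambda>a. mtrace (X * V a) \<cdot>\<^sub>m R a) S $$ (I, J)
       = (\<Sum>P<n. \<Sum>Q<n. X $$ (P, Q) * (\<Sum>a\<in>S. V a $$ (Q, P) * R a $$ (I, J)))"
proof -
  have "(mtrace (X * V a) \<cdot>\<^sub>m R a) $$ (I, J)
      = (\<Sum>P<n. \<Sum>Q<n. X $$ (P, Q) * (V a $$ (Q, P) * R a $$ (I, J)))" if "a \<in> S" for a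
    using assms(3-5) carrier_matD[OF assms(2)[OF that]]
    by (simp add: mtrace_mult[OF assms(3) assms(1)[OF that]] sum_distrib_right mult.assoc)
  then have "msum n (\<lambda>a. mtrace (X * V a) \<cdot>\<^sub>m R a) S $$ (I, J)
      = (\<Sum>a\<in>S. \<Sum>P<n. \<Sum>Q<n. X $$ (P, Q) * (V a $$ (Q, P) * R a $$ (I, J)))"
    unfolding msum_entry[OF assms(4,5)] by (rule sum.cong[OF refl])
  also have "\<dots> = (\<Sum>P<n. \<Sum>Q<n. \<Sum>a\<in>S. X $$ (P, Q) * (V a $$ (Q, P) * R a $$ (I, J)))"
    by (subst sum.swap) (simp add: sum.swap[of _ S])
  finally show ?thesis
    by (simp add: sum_distrib_left)
qed

lemma shift_carrier [simp]: "shift d \<in> carrier_mat d d"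
  unfolding shift_def by simp

lemma clock_carrier [simp]: "clock d \<in> carrier_mat d d"
  unfolding clock_def by simp

lemma weyl_carrier [simp]: "weyl d a1 a2 \<in> carrier_mat d d"
  unfolding weyl_def by (simp add: mult_carrier_mat[of _ d d _ d])

lemma shift_power_entry:
  assumes "i < d" "j < d"
  shows "(shift d ^\<^sub>m a) $$ (i, j) = of_bool ([i = j + a] (mod d))"
  using assms(2)
proof (induction a arbitrary: j)
  case 0
  then show ?case using assms(1) by (simp add: shift_def cong_def)
next
  case (Suc a)
  have "(shift d ^\<^sub>m Suc a) $$ (i, j) = (\<Sum>k<d. (shift d ^\<^sub>m a) $$ (i, k) * shift d $$ (k, j))"
    unfolding pow_mat.simps(2) by (rule index_mult_mat_sum) (use Suc.prems assms(1) in auto)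
  also have "\<dots> = (\<Sum>k<d. if k = (j + 1) mod d then of_bool ([i = k + a] (mod d)) else 0)"
    using Suc by (intro sum.cong) (auto simp: shift_def)
  also have "\<dots> = of_bool ([i = (j + 1) mod d + a] (mod d))"
    using Suc.prems by simp
  also have "[i = (j + 1) mod d + a] (mod d) \<longleftrightarrow> [i = j + Suc a] (mod d)"
    by (simp add: cong_def mod_simps)
  finally show ?case .
qed

lemma clock_power_entry:
  assumes "i < d" "j < d"
  shows "(clock d ^\<^sub>m a) $$ (i, j) = of_bool (i = j) * omega d ^ (j * a)"
proof (induction a)
  case 0
  then show ?case using assms by (simp add: clock_def)
next
  case (Suc a)
  have "(clock d ^\<^sub>m Suc a) $$ (i, j) = (\<Sum>k<d. (clock d ^\<^sub>m a) $$ (i, k) * clock d $$ (k, j))"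
    unfolding pow_mat.simps(2) by (rule index_mult_mat_sum) (use assms in auto)
  also have "\<dots> = (\<Sum>k<d. if k = j then of_bool (i = j) * omega d ^ (j * a) * omega d ^ j else 0)"
    using Suc assms by (intro sum.cong) (auto simp: clock_def)
  also have "\<dots> = of_bool (i = j) * omega d ^ (j * Suc a)"
    using assms by (simp add: power_add mult.commute)
  finally show ?case .
qed

lemma weyl_entry:
  assumes "i < d" "j < d"
  shows "weyl d a1 a2 $$ (i, j) = of_bool ([i = j + a1] (mod d)) * tau d ^ (a1 * a2) * omega d ^ (j * a2)"
proof -
  have "shift d ^\<^sub>m a1 * clock d ^\<^sub>m a2 \<in> carrier_mat d d"
    by (simp add: mult_carrier_mat[of _ d d _ d])
  note dims = carrier_matD[OF this]
  have "(shift d ^\<^sub>m a1 * clock d ^\<^sub>m a2) $$ (i, j)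
      = (\<Sum>k<d. (shift d ^\<^sub>m a1) $$ (i, k) * (clock d ^\<^sub>m a2) $$ (k, j))"
    by (rule index_mult_mat_sum) (use assms in auto)
  also have "\<dots> = (\<Sum>k<d. of_bool ([i = k + a1] (mod d)) * (of_bool (k = j) * omega d ^ (j * a2)))"
    using assms by (intro sum.cong refl) (simp add: shift_power_entry clock_power_entry)
  also have "\<dots> = (\<Sum>k<d. if k = j then of_bool ([i = j + a1] (mod d)) * omega d ^ (j * a2) else 0)"
    by (intro sum.cong) auto
  also have "\<dots> = of_bool ([i = j + a1] (mod d)) * omega d ^ (j * a2)"
    using assms(2) by simp
  finally show ?thesis
    using assms dims by (simp add: weyl_def)
qed

lemma weyl_twirl_kernel:
  assumes "0 < d" "i < d" "j < d" "k < d" "l < d" "p < d" "q < d" "r < d" "s < d"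
  shows "(\<Sum>(a1, a2)\<in>{0..<d} \<times> {0..<d}.
            weyl d a1 a2 $$ (i, p) * weyl d a1 a2 $$ (j, q) * cnj (weyl d a1 a2 $$ (k, r) * weyl d a1 a2 $$ (l, s)))
       = (\<Sum>(a1, a2)\<in>{0..<d} \<times> {0..<d}.
            cnj (weyl d a1 a2 $$ (p, r)) * weyl d a1 a2 $$ (s, q) * (weyl d a1 a2 $$ (i, k) * cnj (weyl d a1 a2 $$ (l, j))))"
proof -
  have lhs_term: "weyl d a1 a2 $$ (i, p) * weyl d a1 a2 $$ (j, q) * cnj (weyl d a1 a2 $$ (k, r) * weyl d a1 a2 $$ (l, s))
      = of_bool ([i = p + a1] (mod d) \<and> [j = q + a1] (mod d) \<and> [k = r + a1] (mod d) \<and> [l = s + a1] (mod d))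
        * (omega d ^ ((p + q) * a2) * cnj (omega d ^ ((r + s) * a2)))" for a1 a2
    using assms by (auto simp: weyl_entry cnj_tau power_inverse power_add add_mult_distrib field_simps)
  have rhs_term: "cnj (weyl d a1 a2 $$ (p, r)) * weyl d a1 a2 $$ (s, q) * (weyl d a1 a2 $$ (i, k) * cnj (weyl d a1 a2 $$ (l, j)))
      = of_bool ([p = r + a1] (mod d) \<and> [s = q + a1] (mod d) \<and> [i = k + a1] (mod d) \<and> [l = j + a1] (mod d))
        * (omega d ^ ((q + k) * a2) * cnj (omega d ^ ((r + j) * a2)))" for a1 a2
    using assms by (auto simp: weyl_entry cnj_tau power_inverse power_add add_mult_distrib field_simps)
  show ?thesis
    unfolding sum.cartesian_product[symmetric] atLeast0LessThan lhs_term rhs_term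
    unfolding sum_distrib_left[symmetric] omega_character_sum[OF assms(1)]
    unfolding mult.assoc[symmetric] sum_distrib_right[symmetric]
    using common_shift_count_eq[OF assms(1), where 'a = complex, of i p j q k r l s] by (simp only:)
qed

lemma weyl_twirl_kernel_kron:
  fixes d :: nat
  defines "W \<equiv> \<lambda>a. weyl d (fst a) (snd a)"
  assumes "0 < d" "I < d * d" "J < d * d" "P < d * d" "Q < d * d"
  shows "(\<Sum>a\<in>{0..<d} \<times> {0..<d}. kron (W a) (W a) $$ (I, P) * cnj (kron (W a) (W a) $$ (J, Q)))
       = (\<Sum>a\<in>{0..<d} \<times> {0..<d}. kron (dagger (W a)) (W a) $$ (Q, P) * kron (W a) (dagger (W a)) $$ (I, J))"
proof -
  have div_mod: "x div d < d" "x mod d < d" if "x < d * d" for x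
    using that assms(2) by (simp_all add: less_mult_imp_div_less)
  note bounds = div_mod[OF assms(3)] div_mod[OF assms(4)] div_mod[OF assms(5)] div_mod[OF assms(6)]
  show ?thesis
    using weyl_twirl_kernel[OF assms(2) bounds] assms(3-6) bounds
    by (simp add: W_def split_def kron_entry[of _ d d _ d d] dagger_entry[of _ d d] mult.assoc)
qed

theorem lemma5:
  fixes d :: nat and X :: "complex mat"
  assumes "d \<ge> 2" and "X \<in> carrier_mat (d * d) (d * d)"
  shows "msum (d * d)
           (\<lambda>(a1, a2). kron (weyl d a1 a2) (weyl d a1 a2) * X
                         * dagger (kron (weyl d a1 a2) (weyl d a1 a2)))
           ({0..<d} \<times> {0..<d})
       = msum (d * d)
           (\<lambda>(a1, a2). mtrace (X * kron (dagger (weyl d a1 a2)) (weyl d a1 a2))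
                         \<cdot>\<^sub>m kron (weyl d a1 a2) (dagger (weyl d a1 a2)))
           ({0..<d} \<times> {0..<d})"
proof (rule eq_matI, goal_cases)
  case (1 I J)
  then have "I < d * d" "J < d * d"
    by simp_all
  with assms show ?case
    unfolding split_def
    by (simp add: msum_sandwich_entry[of _ _ "d * d"] msum_trace_smult_entry[of _ _ "d * d"]
        weyl_twirl_kernel_kron)
qed simp_all

end
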